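(* Let $\mathbb K$ be a field, let $A,A^*$ be a TD pair over $\mathbb K$, and let $q$ be a nonzero scalar in $\mathbb K$ with $q\ne 1,-1$. Then the following are equivalent: (i) $A,A^*$ satisfy the $q$-Serre relations $A^3A^*-(q+q^{-1}+1)A^2A^*A+(q+q^{-1}+1)AA^*A^2-A^*A^3=0$ and $A^{*3}A-(q+q^{-1}+1)A^{*2}AA^*+(q+q^{-1}+1)A^*AA^{*2}-AA^{*3}=0$; (ii) there exists an eigenvalue sequence for $A,A^*$ which is in $q$-geometric progression, and there exists a dual eigenvalue sequence for $A,A^*$ which is in $q$-geometric progression.
   Context: A TD pair on a finite-dimensional nonzero $\mathbb K$-vector space $V$ is an ordered pair $A,A^*$ of diagonalizable linear maps $V\to V$ such that there is an ordering $V_0,\dots,V_d$ of the eigenspaces of $A$ with $A^*V_i\subseteq V_{i-1}+V_i+V_{i+1}$ ($V_{-1}=V_{d+1}=0$), an ordering $V^*_0,\dots,V^*_\delta$ of the eigenspaces of $A^*$ with $AV^*_i\subseteq V^*_{i-1}+V^*_i+V^*_{i+1}$ ($V^*_{-1}=V^*_{\delta+1}=0$), and no subspace other than $0,V$ is invariant under both $A$ and $A^*$. An eigenvalue sequence for $A,A^*$ is an ordering $\theta_0,\dots,\theta_d$ of the distinct eigenvalues of $A$ such that the corresponding eigenspaces satisfy the first ordering condition; a dual eigenvalue sequence for $A,A^*$ is an eigenvalue sequence for the pair $A^*,A$. A sequence $\theta_0,\dots,\theta_d$ is in $q$-geometric progression if $\theta_i=\theta_{i-1}q$ for $1\le i\le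 d$. *)

theory Defs
  imports "Jordan_Normal_Form.Char_Poly"
begin

text \<open>The finite-dimensional nonzero vector space V is modelled as K^n (n > 0),
  i.e. carrier_vec n; linear maps V -> V are n x n matrices.\<close>

definition diagonalizable_mat :: "'a::field mat \<Rightarrow> bool" where
  "diagonalizable_mat A = (\<exists>D. similar_mat A D \<and> diagonal_mat D)"

definition eigenspace_mat :: "nat \<Rightarrow> 'a::field mat \<Rightarrow> 'a \<Rightarrow> 'a vec set" where
  "eigenspace_mat n A \<theta> = {v \<in> carrier_vec n. A *\<^sub>v v = \<theta> \<cdot>\<^sub>v v}"

definition vsum_set :: "'a::field vec set \<Rightarrow> 'a vec set \<Rightarrow> 'a vec set" where
  "vsum_set S T = {x + y | x y. x \<in> S \<and> y \<in> T}"

definition espace_at :: "nat \<Rightarrow> 'a::field mat \<Rightarrow> nat \<Rightarrow> (nat \<Rightarrow> 'a) \<Rightarrow> int \<Rightarrow> 'a vec set" where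
  "espace_at n A d th j =
     (if 0 \<le> j \<and> j \<le> int d then eigenspace_mat n A (th (nat j)) else {0\<^sub>v n})"

definition eigen_ordering :: "'a::field mat \<Rightarrow> nat \<Rightarrow> (nat \<Rightarrow> 'a) \<Rightarrow> bool" where
  "eigen_ordering A d th = (inj_on th {..d} \<and> th ` {..d} = {\<theta>. eigenvalue A \<theta>})"

text \<open>Eigenvalue sequence for the pair A, B (B plays the role of A^*).\<close>
definition eigenvalue_seq :: "nat \<Rightarrow> 'a::field mat \<Rightarrow> 'a mat \<Rightarrow> nat \<Rightarrow> (nat \<Rightarrow> 'a) \<Rightarrow> bool" where
  "eigenvalue_seq n A B d th =
     (eigen_ordering A d th \<and>
      (\<forall>i\<le>d. \<forall>v \<in> eigenspace_mat n A (th i).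
         B *\<^sub>v v \<in> vsum_set (espace_at n A d th (int i - 1))
                     (vsum_set (espace_at n A d th (int i)) (espace_at n A d th (int i + 1)))))"

definition subspace_vec :: "nat \<Rightarrow> 'a::field vec set \<Rightarrow> bool" where
  "subspace_vec n W = (W \<subseteq> carrier_vec n \<and> 0\<^sub>v n \<in> W \<and>
     (\<forall>x\<in>W. \<forall>y\<in>W. x + y \<in> W) \<and> (\<forall>c. \<forall>x\<in>W. c \<cdot>\<^sub>v x \<in> W))"

definition TD_pair :: "nat \<Rightarrow> 'a::field mat \<Rightarrow> 'a mat \<Rightarrow> bool" where
  "TD_pair n A B =
     (0 < n \<and> A \<in> carrier_mat n n \<and> B \<in> carrier_mat n n \<and>
      diagonalizable_mat A \<and> diagonalizable_mat B \<and>
      (\<exists>d th. eigenvalue_seq n A B d th) \<and>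
      (\<exists>\<delta> th. eigenvalue_seq n B A \<delta> th) \<and>
      (\<forall>W. subspace_vec n W \<and> (\<forall>v\<in>W. A *\<^sub>v v \<in> W) \<and> (\<forall>v\<in>W. B *\<^sub>v v \<in> W)
           \<longrightarrow> W = {0\<^sub>v n} \<or> W = carrier_vec n))"

definition q_geometric :: "'a::field \<Rightarrow> nat \<Rightarrow> (nat \<Rightarrow> 'a) \<Rightarrow> bool" where
  "q_geometric q d th = (\<forall>i. 1 \<le> i \<and> i \<le> d \<longrightarrow> th i = th (i - 1) * q)"

definition q_serre :: "nat \<Rightarrow> 'a::field \<Rightarrow> 'a mat \<Rightarrow> 'a mat \<Rightarrow> bool" where
  "q_serre n q A B =
     (let \<beta> = q + inverse q + 1 in
      A * A * A * B - \<beta> \<cdot>\<^sub>m (A * A * B * A) + \<beta> \<cdot>\<^sub>m (A * B * A * A) - B * A * A * A = 0\<^sub>m n n)"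

end

theory Submission
  imports Defs
begin

(* Write V_j for the eigenspace of A for theta_j and p(y, x) = (y - x)(y - q x)(y - x/q).  If x lies in
   V_j and B x = u_(j-1) + u_j + u_(j+1) with u_k in V_k, then the Serre expression S(A, B) maps x to
   p(theta_(j-1), theta_j) u_(j-1) + p(theta_(j+1), theta_j) u_(j+1).  So a q-geometric eigenvalue
   sequence makes S vanish on every V_j, hence everywhere because A is diagonalizable.  Conversely, if
   S = 0 but p(theta_(i+1), theta_i) is nonzero, then B maps V_i into V_0 + ... + V_i, so this sum is a
   nonzero proper subspace invariant under A and B, contradicting irreducibility.  Thus
   theta_(i+1) = q^(+-1) theta_i for each i, and as the theta_i are distinct the sign of the exponent
   never changes: the sequence or its reversal, which is again an eigenvalue sequence, is q-geometric. *)

section \<open>Subspaces and sums of eigenspaces\<close>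

lemma mult_mat_vec_zero: "M \<in> carrier_mat m n \<Longrightarrow> M *\<^sub>v 0\<^sub>v n = 0\<^sub>v m"
  by (intro eq_vecI) auto

lemma smult_vec_eq_zero:
  assumes "(c :: 'a::field) \<noteq> 0" "v \<in> carrier_vec n" "c \<cdot>\<^sub>v v = 0\<^sub>v n"
  shows "v = 0\<^sub>v n"
proof -
  have "v = inverse c \<cdot>\<^sub>v (c \<cdot>\<^sub>v v)"
    using assms(1,2) by (intro eq_vecI) auto
  also have "\<dots> = 0\<^sub>v n"
    using assms(3) by (intro eq_vecI) auto
  finally show ?thesis .
qed

lemma col_eq_mult_mat_vec_unit:
  fixes P :: "'a::semiring_1 mat"
  assumes "P \<in> carrier_mat m n" "k < n"
  shows "col P k = P *\<^sub>v unit_vec n k"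
  using col_mult2[of P m n "1\<^sub>m n" n k] assms by (simp add: right_mult_one_mat[OF assms(1)])

lemma zero_mat_if_mult_mat_vec_zero:
  fixes M :: "'a::field mat"
  assumes M: "M \<in> carrier_mat m n" and zero: "\<And>v. v \<in> carrier_vec n \<Longrightarrow> M *\<^sub>v v = 0\<^sub>v m"
  shows "M = 0\<^sub>m m n"
proof (rule eq_matI)
  fix i j assume i: "i < dim_row (0\<^sub>m m n :: 'a mat)" and j: "j < dim_col (0\<^sub>m m n :: 'a mat)"
  have "M $$ (i, j) = col M j $ i"
    using i j M by simp
  also have "\<dots> = 0"
    using zero[of "unit_vec n j"] col_eq_mult_mat_vec_unit[OF M] i j by simp
  finally show "M $$ (i, j) = 0\<^sub>m m n $$ (i, j)"
    using i j by simp
qed (use M in auto)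

lemma subspace_vec_zero: "subspace_vec n {0\<^sub>v n}"
  unfolding subspace_vec_def by auto

lemma subspace_vec_vsum_set:
  assumes S: "subspace_vec n S" and T: "subspace_vec n T"
  shows "subspace_vec n (vsum_set S T)"
  unfolding subspace_vec_def
proof (intro conjI ballI allI)
  have carr: "S \<subseteq> carrier_vec n" "T \<subseteq> carrier_vec n"
    using S T unfolding subspace_vec_def by auto
  then show "vsum_set S T \<subseteq> carrier_vec n"
    unfolding vsum_set_def by (blast intro: add_carrier_vec)
  have "0\<^sub>v n + 0\<^sub>v n \<in> vsum_set S T"
    using S T unfolding subspace_vec_def vsum_set_def by blast
  then show "0\<^sub>v n \<in> vsum_set S T"
    by simp
  fix a b c
  assume "a \<in> vsum_set S T"
  then obtain x y where x: "x \<in> S" and y: "y \<in> T" and a: "a = x + y"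
    unfolding vsum_set_def by blast
  have xy: "x \<in> carrier_vec n" "y \<in> carrier_vec n"
    using x y carr by auto
  have "c \<cdot>\<^sub>v x + c \<cdot>\<^sub>v y \<in> vsum_set S T"
    using x y S T unfolding subspace_vec_def vsum_set_def by blast
  then show "c \<cdot>\<^sub>v a \<in> vsum_set S T"
    using xy unfolding a by (simp add: smult_add_distrib_vec)
  assume "b \<in> vsum_set S T"
  then obtain x' y' where x': "x' \<in> S" and y': "y' \<in> T" and b: "b = x' + y'"
    unfolding vsum_set_def by blast
  have "(x + x') + (y + y') \<in> vsum_set S T"
    using x y x' y' S T unfolding subspace_vec_def vsum_set_def by blast
  moreover have "a + b = (x + x') + (y + y')"
    using xy x' y' carr unfolding a b by (intro eq_vecI) (auto simp: subset_iff)
  ultimately show "a + b \<in> vsum_set S T"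
    by simp
qed

lemma subspace_vec_eigenspace:
  assumes "A \<in> carrier_mat n n"
  shows "subspace_vec n (eigenspace_mat n A \<theta>)"
  using assms unfolding subspace_vec_def eigenspace_mat_def
  by (auto simp: mult_add_distrib_mat_vec smult_add_distrib_vec mult_mat_vec)

lemma subspace_vec_preimage:
  assumes W: "subspace_vec n W" and M: "M \<in> carrier_mat n n"
  shows "subspace_vec n {v \<in> carrier_vec n. M *\<^sub>v v \<in> W}"
  using assms unfolding subspace_vec_def
  by (auto simp: mult_add_distrib_mat_vec mult_mat_vec mult_mat_vec_zero)

lemma subspace_vec_mult_mat_vec:
  assumes S: "subspace_vec m S" and P: "P \<in> carrier_mat m n"
    and cols: "\<And>k. k < n \<Longrightarrow> col P k \<in> S" and w: "w \<in> carrier_vec n"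
  shows "P *\<^sub>v w \<in> S"
proof -
  define trunc where "trunc j = vec n (\<lambda>k. if k < j then w $ k else 0)" for j
  have "P *\<^sub>v trunc j \<in> S" for j
  proof (induction j)
    case 0
    have "trunc 0 = 0\<^sub>v n"
      unfolding trunc_def by auto
    then show ?case
      using S P unfolding subspace_vec_def by (simp add: mult_mat_vec_zero)
  next
    case (Suc j)
    show ?case
    proof (cases "j < n")
      case True
      have "trunc (Suc j) = trunc j + w $ j \<cdot>\<^sub>v unit_vec n j"
        unfolding trunc_def using True by (intro eq_vecI) (auto simp: unit_vec_def less_Suc_eq)
      then have "P *\<^sub>v trunc (Suc j) = P *\<^sub>v trunc j + w $ j \<cdot>\<^sub>v col P j"
        using P True by (simp add: mult_add_distrib_mat_vec mult_mat_vec col_eq_mult_mat_vec_unit trunc_def)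
      then show ?thesis
        using Suc.IH cols[OF True] S unfolding subspace_vec_def by simp
    next
      case False
      then have "trunc (Suc j) = trunc j"
        unfolding trunc_def by auto
      then show ?thesis using Suc.IH by simp
    qed
  qed
  moreover have "trunc n = w"
    using w unfolding trunc_def by auto
  ultimately show ?thesis by metis
qed

lemma vsum_set_invariant:
  assumes "M \<in> carrier_mat n n" "S \<subseteq> carrier_vec n" "T \<subseteq> carrier_vec n"
    and "\<forall>v\<in>S. M *\<^sub>v v \<in> S" "\<forall>v\<in>T. M *\<^sub>v v \<in> T"
  shows "\<forall>v\<in>vsum_set S T. M *\<^sub>v v \<in> vsum_set S T"
  using assms unfolding vsum_set_def by (fastforce simp: mult_add_distrib_mat_vec)

lemma vsum_set_reverse:
  assumes "S \<subseteq> carrier_vec n" "T \<subseteq> carrier_vec n" "U \<subseteq> carrier_vec n"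
  shows "vsum_set S (vsum_set T U) = vsum_set U (vsum_set T S)"
proof -
  have "vsum_set S (vsum_set T U) \<subseteq> vsum_set U (vsum_set T S)"
    if "S \<subseteq> carrier_vec n" "T \<subseteq> carrier_vec n" "U \<subseteq> carrier_vec n" for S T U
  proof
    fix v assume "v \<in> vsum_set S (vsum_set T U)"
    then obtain x y z where xyz: "x \<in> S" "y \<in> T" "z \<in> U" and v: "v = x + (y + z)"
      unfolding vsum_set_def by blast
    have "x \<in> carrier_vec n" "y \<in> carrier_vec n" "z \<in> carrier_vec n"
      using xyz that by auto
    then have "v = z + (y + x)"
      unfolding v by (intro eq_vecI) auto
    then show "v \<in> vsum_set U (vsum_set T S)"
      using xyz unfolding vsum_set_def by blast
  qed
  from this[OF assms] this[OF assms(3,2,1)] show ?thesis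
    by (rule subset_antisym)
qed

definition irreducible_pair :: "nat \<Rightarrow> 'a::field mat \<Rightarrow> 'a mat \<Rightarrow> bool" where
  "irreducible_pair n A B \<longleftrightarrow> (\<forall>W. subspace_vec n W \<and> (\<forall>v\<in>W. A *\<^sub>v v \<in> W) \<and> (\<forall>v\<in>W. B *\<^sub>v v \<in> W)
     \<longrightarrow> W = {0\<^sub>v n} \<or> W = carrier_vec n)"

lemma irreducible_pair_commute: "irreducible_pair n A B \<longleftrightarrow> irreducible_pair n B A"
  unfolding irreducible_pair_def by blast

lemma espace_at_reverse: "espace_at n A d (\<lambda>i. th (d - i)) j = espace_at n A d th (int d - j)"
proof (cases "0 \<le> j \<and> j \<le> int d")
  case True
  then have "nat (int d - j) = d - nat j"
    by auto
  then show ?thesis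
    using True unfolding espace_at_def by auto
qed (auto simp: espace_at_def)

fun eigensum :: "nat \<Rightarrow> 'a::field mat \<Rightarrow> (nat \<Rightarrow> 'a) \<Rightarrow> nat \<Rightarrow> 'a vec set" where
  "eigensum n A th 0 = {0\<^sub>v n}"
| "eigensum n A th (Suc k) = vsum_set (eigenspace_mat n A (th k)) (eigensum n A th k)"

context
  fixes A :: "'a::field mat" and n :: nat
  assumes A: "A \<in> carrier_mat n n"
begin

lemma subspace_vec_eigensum: "subspace_vec n (eigensum n A th k)"
  by (induction k) (simp_all add: subspace_vec_zero subspace_vec_vsum_set subspace_vec_eigenspace A)

lemma eigensum_carrier: "eigensum n A th k \<subseteq> carrier_vec n"
  using subspace_vec_eigensum unfolding subspace_vec_def by blast

lemma eigenspace_invariant: "\<forall>v\<in>eigenspace_mat n A \<theta>. A *\<^sub>v v \<in> eigenspace_mat n A \<theta>"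
  using subspace_vec_eigenspace[OF A] unfolding eigenspace_mat_def subspace_vec_def by auto

lemma eigensum_invariant: "\<forall>v\<in>eigensum n A th k. A *\<^sub>v v \<in> eigensum n A th k"
proof (induction k)
  case (Suc k)
  show ?case
    using vsum_set_invariant[OF A _ eigensum_carrier eigenspace_invariant Suc.IH] A
    by (auto simp: eigenspace_mat_def)
qed (use A in auto)

lemma eigenspace_subset_eigensum:
  assumes "j < k"
  shows "eigenspace_mat n A (th j) \<subseteq> eigensum n A th k"
  using assms
proof (induction k)
  case (Suc k)
  have zero: "0\<^sub>v n \<in> eigenspace_mat n A (th k)" "0\<^sub>v n \<in> eigensum n A th k"
    using subspace_vec_eigenspace[OF A] subspace_vec_eigensum unfolding subspace_vec_def by auto
  show ?case
  proof
    fix x assume x: "x \<in> eigenspace_mat n A (th j)"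
    then have xc: "x \<in> carrier_vec n"
      unfolding eigenspace_mat_def by simp
    show "x \<in> eigensum n A th (Suc k)"
    proof (cases "j = k")
      case True
      then have "x + 0\<^sub>v n \<in> eigensum n A th (Suc k)"
        using x zero unfolding eigensum.simps vsum_set_def by auto
      then show ?thesis using xc by simp
    next
      case False
      then have "0\<^sub>v n + x \<in> eigensum n A th (Suc k)"
        using x zero Suc unfolding eigensum.simps vsum_set_def by auto
      then show ?thesis using xc by simp
    qed
  qed
qed simp

lemma eigensum_subset:
  assumes S: "subspace_vec n S" and sub: "\<And>j. j < k \<Longrightarrow> eigenspace_mat n A (th j) \<subseteq> S"
  shows "eigensum n A th k \<subseteq> S"
  using sub
proof (induction k)
  case 0
  then show ?case using S unfolding subspace_vec_def by simp
next
  case (Suc k)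
  have "eigenspace_mat n A (th k) \<subseteq> S" "eigensum n A th k \<subseteq> S"
    using Suc by simp_all
  then have "x + y \<in> S" if "x \<in> eigenspace_mat n A (th k)" "y \<in> eigensum n A th k" for x y
    using that S unfolding subspace_vec_def by blast
  then show ?case
    by (auto simp: vsum_set_def)
qed

lemma eigenspace_inter_eigensum:
  assumes "w \<in> eigenspace_mat n A \<mu>" "\<mu> \<notin> th ` {..<k}" "w \<in> eigensum n A th k"
  shows "w = 0\<^sub>v n"
  using assms
proof (induction k arbitrary: w)
  case (Suc k)
  obtain u s where u: "u \<in> eigenspace_mat n A (th k)" and s: "s \<in> eigensum n A th k"
    and w: "w = u + s"
    using Suc.prems(3) unfolding eigensum.simps vsum_set_def by auto
  have uc: "u \<in> carrier_vec n" and sc: "s \<in> carrier_vec n" and wc: "w \<in> carrier_vec n"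
    using u s Suc.prems(1) eigensum_carrier unfolding eigenspace_mat_def by auto
  have Aw: "\<mu> \<cdot>\<^sub>v w = th k \<cdot>\<^sub>v u + A *\<^sub>v s"
    using Suc.prems(1) u A uc sc unfolding w eigenspace_mat_def by (simp add: mult_add_distrib_mat_vec)
  have z: "(\<mu> - th k) \<cdot>\<^sub>v w = A *\<^sub>v s + (- th k) \<cdot>\<^sub>v s"
  proof (rule eq_vecI)
    fix i assume "i < dim_vec (A *\<^sub>v s + (- th k) \<cdot>\<^sub>v s)"
    then have i: "i < n"
      using sc by simp
    have "\<mu> * w $ i = th k * u $ i + (A *\<^sub>v s) $ i"
      using arg_cong[OF Aw, of "\<lambda>v. v $ i"] i uc wc A by simp
    then show "((\<mu> - th k) \<cdot>\<^sub>v w) $ i = (A *\<^sub>v s + (- th k) \<cdot>\<^sub>v s) $ i"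
      using i uc sc A unfolding w by (simp add: algebra_simps)
  qed (use A wc sc in simp)
  have "(\<mu> - th k) \<cdot>\<^sub>v w \<in> eigensum n A th k"
    using s eigensum_invariant subspace_vec_eigensum unfolding z subspace_vec_def by blast
  moreover have "(\<mu> - th k) \<cdot>\<^sub>v w \<in> eigenspace_mat n A \<mu>"
    using Suc.prems(1) subspace_vec_eigenspace[OF A] unfolding subspace_vec_def by blast
  moreover have "\<mu> \<notin> th ` {..<k}" "\<mu> - th k \<noteq> 0"
    using Suc.prems(2) by auto
  ultimately show ?case
    using Suc.IH smult_vec_eq_zero wc by blast
qed (simp add: vsum_set_def)

lemma diagonalizable_eigenbasis:
  assumes "diagonalizable_mat A"
  obtains P Q where "P \<in> carrier_mat n n" "Q \<in> carrier_mat n n" "P * Q = 1\<^sub>m n"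
    "\<And>k. k < n \<Longrightarrow> \<exists>\<theta>. eigenvalue A \<theta> \<and> col P k \<in> eigenspace_mat n A \<theta>"
proof -
  obtain D where "similar_mat A D" and diag: "diagonal_mat D"
    using assms unfolding diagonalizable_mat_def by auto
  then obtain m P Q where PQ: "{A, D, P, Q} \<subseteq> carrier_mat m m" "P * Q = 1\<^sub>m m" "Q * P = 1\<^sub>m m"
    "A = P * D * Q"
    using similar_matD by blast
  then have "m = n"
    using A by auto
  then have P: "P \<in> carrier_mat n n" and Q: "Q \<in> carrier_mat n n" and D: "D \<in> carrier_mat n n"
    and PQ1: "P * Q = 1\<^sub>m n" and QP1: "Q * P = 1\<^sub>m n"
    using PQ by auto
  have "A * P = P * D * (Q * P)"
    unfolding PQ(4) using P Q D by (simp add: assoc_mult_mat[of _ n n _ n _ n])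
  then have AP: "A * P = P * D"
    using QP1 P D by simp
  have "eigenvalue A (D $$ (k, k)) \<and> col P k \<in> eigenspace_mat n A (D $$ (k, k))" if k: "k < n" for k
  proof -
    have "col D k = D $$ (k, k) \<cdot>\<^sub>v unit_vec n k"
      using D diag k unfolding diagonal_mat_def by (intro eq_vecI) auto
    then have "A *\<^sub>v col P k = D $$ (k, k) \<cdot>\<^sub>v col P k"
      using col_mult2[OF A P k] col_mult2[OF P D k] AP P k
      by (simp add: mult_mat_vec col_eq_mult_mat_vec_unit)
    moreover have "col P k \<noteq> 0\<^sub>v n"
    proof
      assume "col P k = 0\<^sub>v n"
      then have "col (Q * P) k = 0\<^sub>v n"
        using col_mult2[OF Q P k] Q by (simp add: mult_mat_vec_zero)
      then show False
        using QP1 k by simp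
    qed
    ultimately show ?thesis
      using A col_carrier_vec[OF k P] unfolding eigenvalue_def eigenvector_def eigenspace_mat_def by auto
  qed
  then show thesis
    using that P Q PQ1 by blast
qed

lemma diagonalizable_eigensum_eq_carrier:
  assumes "diagonalizable_mat A" and eo: "eigen_ordering A d th"
  shows "eigensum n A th (Suc d) = carrier_vec n"
proof -
  obtain P Q where P: "P \<in> carrier_mat n n" and Q: "Q \<in> carrier_mat n n" and PQ: "P * Q = 1\<^sub>m n"
    and eigen: "\<And>k. k < n \<Longrightarrow> \<exists>\<theta>. eigenvalue A \<theta> \<and> col P k \<in> eigenspace_mat n A \<theta>"
    using diagonalizable_eigenbasis[OF \<open>diagonalizable_mat A\<close>] by blast
  have col_eigen: "col P k \<in> eigensum n A th (Suc d)" if k: "k < n" for k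
  proof -
    obtain \<theta> where "eigenvalue A \<theta>" and col: "col P k \<in> eigenspace_mat n A \<theta>"
      using eigen[OF k] by blast
    then obtain j where "j \<le> d" "th j = \<theta>"
      using eo unfolding eigen_ordering_def by force
    then show ?thesis
      using eigenspace_subset_eigensum[of j "Suc d" th] col by auto
  qed
  have "v \<in> eigensum n A th (Suc d)" if v: "v \<in> carrier_vec n" for v
  proof -
    have "v = P *\<^sub>v (Q *\<^sub>v v)"
      using PQ P Q v by (simp flip: assoc_mult_mat_vec)
    moreover have "Q *\<^sub>v v \<in> carrier_vec n"
      using Q v by simp
    ultimately show ?thesis
      using subspace_vec_mult_mat_vec[OF subspace_vec_eigensum P col_eigen] by metis
  qed
  then show ?thesis
    using eigensum_carrier by blast
qed

lemma eigenspace_inter_eq_zero: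
  assumes "x \<in> eigenspace_mat n A \<mu>" "x \<in> eigenspace_mat n A \<nu>" "\<mu> \<noteq> \<nu>"
  shows "x = 0\<^sub>v n"
proof -
  have xc: "x \<in> carrier_vec n"
    using assms unfolding eigenspace_mat_def by simp
  have "(\<mu> - \<nu>) \<cdot>\<^sub>v x = 0\<^sub>v n"
  proof (rule eq_vecI)
    fix i assume i: "i < dim_vec (0\<^sub>v n :: 'a vec)"
    have "(\<mu> \<cdot>\<^sub>v x) $ i = (\<nu> \<cdot>\<^sub>v x) $ i"
      using assms unfolding eigenspace_mat_def by auto
    then show "((\<mu> - \<nu>) \<cdot>\<^sub>v x) $ i = 0\<^sub>v n $ i"
      using i xc by (simp add: algebra_simps)
  qed (use xc in simp)
  then show ?thesis
    using smult_vec_eq_zero assms(3) xc by (metis right_minus_eq)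
qed

lemma eigenspace_lincomb_eq_zero:
  assumes u: "u \<in> eigenspace_mat n A \<mu>" and w: "w \<in> eigenspace_mat n A \<nu>"
    and "\<mu> \<noteq> \<nu>" and comb: "a \<cdot>\<^sub>v u + b \<cdot>\<^sub>v w = 0\<^sub>v n" and "b \<noteq> 0"
  shows "w = 0\<^sub>v n"
proof -
  have uc: "u \<in> carrier_vec n" and wc: "w \<in> carrier_vec n"
    using u w unfolding eigenspace_mat_def by auto
  have "b \<cdot>\<^sub>v w = (- a) \<cdot>\<^sub>v u"
  proof (rule eq_vecI)
    fix i assume "i < dim_vec ((- a) \<cdot>\<^sub>v u)"
    then show "(b \<cdot>\<^sub>v w) $ i = ((- a) \<cdot>\<^sub>v u) $ i"
      using arg_cong[OF comb, of "\<lambda>v. v $ i"] uc wc by (simp add: eq_neg_iff_add_eq_0 add.commute)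
  qed (use uc wc in simp)
  moreover have "(- a) \<cdot>\<^sub>v u \<in> eigenspace_mat n A \<mu>" "b \<cdot>\<^sub>v w \<in> eigenspace_mat n A \<nu>"
    using u w subspace_vec_eigenspace[OF A] unfolding subspace_vec_def by blast+
  ultimately have "b \<cdot>\<^sub>v w = 0\<^sub>v n"
    using eigenspace_inter_eq_zero \<open>\<mu> \<noteq> \<nu>\<close> by metis
  then show ?thesis
    using smult_vec_eq_zero \<open>b \<noteq> 0\<close> wc by blast
qed

lemma eigen_ordering_eigenspace_nonzero:
  assumes "eigen_ordering A d th" "j \<le> d"
  obtains w where "w \<in> eigenspace_mat n A (th j)" "w \<noteq> 0\<^sub>v n"
proof -
  have "eigenvalue A (th j)"
    using assms unfolding eigen_ordering_def by auto
  then show thesis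
    using assms A that unfolding eigenvalue_def eigenvector_def eigenspace_mat_def by auto
qed

lemma espace_at_eigen:
  assumes "u \<in> espace_at n A d th j"
  shows "u \<in> carrier_vec n" "A *\<^sub>v u = th (nat j) \<cdot>\<^sub>v u"
  using assms A mult_mat_vec_zero[OF A] unfolding espace_at_def eigenspace_mat_def
  by (auto split: if_splits)

lemma espace_at_subset_eigensum:
  assumes "j < int k"
  shows "espace_at n A d th j \<subseteq> eigensum n A th k"
proof (cases "0 \<le> j \<and> j \<le> int d")
  case True
  then have "nat j < k"
    using assms by (simp add: nat_less_iff)
  then show ?thesis
    using True eigenspace_subset_eigensum[of "nat j" k th] unfolding espace_at_def by simp
next
  case False
  then show ?thesis
    using subspace_vec_eigensum unfolding espace_at_def subspace_vec_def by auto
qed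

lemma eigenvalue_seq_reverse:
  assumes es: "eigenvalue_seq n A B d th"
  shows "eigenvalue_seq n A B d (\<lambda>i. th (d - i))"
  unfolding eigenvalue_seq_def
proof (intro conjI allI impI ballI)
  have bij: "bij_betw (\<lambda>i. d - i) {..d} {..d}"
    by (rule bij_betwI[where g = "\<lambda>i. d - i"]) auto
  moreover have "inj_on th {..d}" "th ` {..d} = {\<theta>. eigenvalue A \<theta>}"
    using es unfolding eigenvalue_seq_def eigen_ordering_def by auto
  ultimately show "eigen_ordering A d (\<lambda>i. th (d - i))"
    unfolding eigen_ordering_def
    using comp_inj_on[OF bij_betw_imp_inj_on[OF bij], of th] bij_betw_imp_surj_on[OF bij]
    by (simp add: comp_def image_image[of th "\<lambda>i. d - i", symmetric])
next
  fix i v assume i: "i \<le> d" and v: "v \<in> eigenspace_mat n A (th (d - i))"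
  have carrier: "espace_at n A d th j \<subseteq> carrier_vec n" for j
    using espace_at_eigen(1) by blast
  have "B *\<^sub>v v \<in> vsum_set (espace_at n A d th (int (d - i) - 1))
      (vsum_set (espace_at n A d th (int (d - i))) (espace_at n A d th (int (d - i) + 1)))"
    using es v unfolding eigenvalue_seq_def by simp
  then have Bv: "B *\<^sub>v v \<in> vsum_set (espace_at n A d th (int (d - i) + 1))
      (vsum_set (espace_at n A d th (int (d - i))) (espace_at n A d th (int (d - i) - 1)))"
    by (subst (asm) vsum_set_reverse[OF carrier carrier carrier])
  have reflect: "int d - (int i - 1) = int (d - i) + 1" "int d - int i = int (d - i)"
    "int d - (int i + 1) = int (d - i) - 1"
    using i by auto
  show "B *\<^sub>v v \<in> vsum_set (espace_at n A d (\<lambda>i. th (d - i)) (int i - 1))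
      (vsum_set (espace_at n A d (\<lambda>i. th (d - i)) (int i))
        (espace_at n A d (\<lambda>i. th (d - i)) (int i + 1)))"
    unfolding espace_at_reverse reflect by (rule Bv)
qed

end

section \<open>The q-Serre expression on eigenvectors\<close>

definition serre_poly :: "'a::field \<Rightarrow> 'a \<Rightarrow> 'a \<Rightarrow> 'a" where
  "serre_poly q y x = y^3 - (q + inverse q + 1) * y^2 * x + (q + inverse q + 1) * y * x^2 - x^3"

lemma serre_poly_factor:
  assumes "q \<noteq> 0"
  shows "q * serre_poly q y x = (y - x) * (y - q * x) * (q * y - x)"
proof -
  have \<beta>: "q * (q + inverse q + 1) = q * q + 1 + q"
    using assms by (simp add: distrib_left)
  have "q * serre_poly q y x
      = q * y^3 - (q * (q + inverse q + 1)) * y^2 * x + (q * (q + inverse q + 1)) * y * x^2 - q * x^3"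
    unfolding serre_poly_def by (simp add: algebra_simps)
  also have "\<dots> = (y - x) * (y - q * x) * (q * y - x)"
    unfolding \<beta> by (simp add: algebra_simps power2_eq_square power3_eq_cube)
  finally show ?thesis .
qed

lemma serre_poly_eq_0_iff:
  assumes "q \<noteq> 0"
  shows "serre_poly q y x = 0 \<longleftrightarrow> y = x \<or> y = q * x \<or> q * y = x"
  using serre_poly_factor[OF assms, of y x] assms by auto

definition serre_mat :: "'a::field \<Rightarrow> 'a mat \<Rightarrow> 'a mat \<Rightarrow> 'a mat" where
  "serre_mat q A B = A * A * A * B - (q + inverse q + 1) \<cdot>\<^sub>m (A * A * B * A)
     + (q + inverse q + 1) \<cdot>\<^sub>m (A * B * A * A) - B * A * A * A"

lemma q_serre_iff_serre_mat: "q_serre n q A B \<longleftrightarrow> serre_mat q A B = 0\<^sub>m n n"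
  unfolding q_serre_def serre_mat_def by (simp add: Let_def)

lemma serre_mat_carrier:
  "A \<in> carrier_mat n n \<Longrightarrow> B \<in> carrier_mat n n \<Longrightarrow> serre_mat q A B \<in> carrier_mat n n"
  unfolding serre_mat_def by (intro minus_carrier_mat mult_carrier_mat)

lemma serre_mat_mult_mat_vec:
  assumes "A \<in> carrier_mat n n" "B \<in> carrier_mat n n" "v \<in> carrier_vec n"
  shows "serre_mat q A B *\<^sub>v v = (A * A * A * B) *\<^sub>v v - (q + inverse q + 1) \<cdot>\<^sub>v ((A * A * B * A) *\<^sub>v v)
    + (q + inverse q + 1) \<cdot>\<^sub>v ((A * B * A * A) *\<^sub>v v) - (B * A * A * A) *\<^sub>v v"
  using assms unfolding serre_mat_def
  by (intro eq_vecI) (auto simp: scalar_prod_def sum_distrib_left sum_subtractf sum.distrib algebra_simps)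

lemma assoc4_mult_mat_vec:
  assumes "A \<in> carrier_mat n n" "B \<in> carrier_mat n n" "C \<in> carrier_mat n n" "D \<in> carrier_mat n n"
    "v \<in> carrier_vec n"
  shows "(A * B * C * D) *\<^sub>v v = A *\<^sub>v (B *\<^sub>v (C *\<^sub>v (D *\<^sub>v v)))"
proof -
  have "(A * B * C * D) *\<^sub>v v = (A * B * C) *\<^sub>v (D *\<^sub>v v)"
    using assms by (intro assoc_mult_mat_vec) auto
  also have "\<dots> = (A * B) *\<^sub>v (C *\<^sub>v (D *\<^sub>v v))"
    using assms by (intro assoc_mult_mat_vec) auto
  also have "\<dots> = A *\<^sub>v (B *\<^sub>v (C *\<^sub>v (D *\<^sub>v v)))"
    using assms by (intro assoc_mult_mat_vec) auto
  finally show ?thesis .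
qed

lemma serre_mat_mult_eigenvector:
  fixes A B :: "'a::field mat"
  assumes A: "A \<in> carrier_mat n n" and B: "B \<in> carrier_mat n n"
    and v: "v \<in> carrier_vec n" "A *\<^sub>v v = x \<cdot>\<^sub>v v"
    and u: "u1 \<in> carrier_vec n" "u2 \<in> carrier_vec n" "u3 \<in> carrier_vec n"
    and Au: "A *\<^sub>v u1 = y1 \<cdot>\<^sub>v u1" "A *\<^sub>v u2 = y2 \<cdot>\<^sub>v u2" "A *\<^sub>v u3 = y3 \<cdot>\<^sub>v u3"
    and Bv: "B *\<^sub>v v = u1 + (u2 + u3)"
  shows "serre_mat q A B *\<^sub>v v
    = serre_poly q y1 x \<cdot>\<^sub>v u1 + (serre_poly q y2 x \<cdot>\<^sub>v u2 + serre_poly q y3 x \<cdot>\<^sub>v u3)"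
proof -
  define L where "L a b c = a \<cdot>\<^sub>v u1 + (b \<cdot>\<^sub>v u2 + c \<cdot>\<^sub>v u3)" for a b c
  have AL: "A *\<^sub>v L a b c = L (a * y1) (b * y2) (c * y3)" for a b c
    unfolding L_def using A u by (simp add: mult_add_distrib_mat_vec mult_mat_vec Au smult_smult_assoc)
  have smult_L: "k \<cdot>\<^sub>v L a b c = L (k * a) (k * b) (k * c)" for k a b c
    unfolding L_def using u by (intro eq_vecI) (auto simp: algebra_simps)
  have BL: "B *\<^sub>v v = L 1 1 1"
    unfolding L_def Bv by simp
  define \<beta> where "\<beta> = q + inverse q + 1"
  have "serre_mat q A B *\<^sub>v v = A *\<^sub>v (A *\<^sub>v (A *\<^sub>v (B *\<^sub>v v)))
      - \<beta> \<cdot>\<^sub>v (A *\<^sub>v (A *\<^sub>v (B *\<^sub>v (A *\<^sub>v v))))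
      + \<beta> \<cdot>\<^sub>v (A *\<^sub>v (B *\<^sub>v (A *\<^sub>v (A *\<^sub>v v))))
      - B *\<^sub>v (A *\<^sub>v (A *\<^sub>v (A *\<^sub>v v)))"
    unfolding serre_mat_mult_mat_vec[OF A B v(1)] \<beta>_def[symmetric] using A B v
    by (simp add: assoc4_mult_mat_vec del: assoc_mult_mat)
  also have "\<dots> = L (y1^3) (y2^3) (y3^3) - \<beta> \<cdot>\<^sub>v L (x * y1^2) (x * y2^2) (x * y3^2)
      + \<beta> \<cdot>\<^sub>v L (x^2 * y1) (x^2 * y2) (x^2 * y3) - L (x^3) (x^3) (x^3)"
    using A B v by (simp add: mult_mat_vec BL AL smult_L power2_eq_square power3_eq_cube ac_simps)
  also have "\<dots> = serre_poly q y1 x \<cdot>\<^sub>v u1 + (serre_poly q y2 x \<cdot>\<^sub>v u2 + serre_poly q y3 x \<cdot>\<^sub>v u3)"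
    unfolding L_def using u by (intro eq_vecI) (auto simp: serre_poly_def \<beta>_def algebra_simps)
  finally show ?thesis .
qed

(* At the ends of the sequence the espace_at terms are zero, so the junk eigenvalues
   th (nat (-1)) = th 0 and th (Suc d) do not matter. *)
lemma serre_mat_mult_eigenspace:
  fixes A B :: "'a::field mat"
  assumes A: "A \<in> carrier_mat n n" and B: "B \<in> carrier_mat n n"
    and es: "eigenvalue_seq n A B d th" and j: "j \<le> d" and x: "x \<in> eigenspace_mat n A (th j)"
  obtains u1 u2 u3 where "u1 \<in> espace_at n A d th (int j - 1)" "u2 \<in> eigenspace_mat n A (th j)"
    "u3 \<in> espace_at n A d th (int j + 1)" "B *\<^sub>v x = u1 + (u2 + u3)"
    "serre_mat q A B *\<^sub>v x
       = serre_poly q (th (nat (int j - 1))) (th j) \<cdot>\<^sub>v u1 + serre_poly q (th (Suc j)) (th j) \<cdot>\<^sub>v u3"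
proof -
  obtain u1 u2 u3 where u: "u1 \<in> espace_at n A d th (int j - 1)" "u2 \<in> espace_at n A d th (int j)"
    "u3 \<in> espace_at n A d th (int j + 1)" and Bx: "B *\<^sub>v x = u1 + (u2 + u3)"
    using es j x unfolding eigenvalue_seq_def vsum_set_def by blast
  have u2: "u2 \<in> eigenspace_mat n A (th j)"
    using u(2) j unfolding espace_at_def by simp
  note e1 = espace_at_eigen[OF A u(1)] and e3 = espace_at_eigen[OF A u(3)]
  have "serre_poly q (th j) (th j) = 0"
    unfolding serre_poly_def by (simp add: algebra_simps power2_eq_square power3_eq_cube)
  moreover have "serre_mat q A B *\<^sub>v x = serre_poly q (th (nat (int j - 1))) (th j) \<cdot>\<^sub>v u1
      + (serre_poly q (th j) (th j) \<cdot>\<^sub>v u2 + serre_poly q (th (Suc j)) (th j) \<cdot>\<^sub>v u3)"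
    using e1 e3 u2 x A B Bx unfolding eigenspace_mat_def
    by (intro serre_mat_mult_eigenvector) (auto simp: nat_add_distrib)
  ultimately have "serre_mat q A B *\<^sub>v x
      = serre_poly q (th (nat (int j - 1))) (th j) \<cdot>\<^sub>v u1 + serre_poly q (th (Suc j)) (th j) \<cdot>\<^sub>v u3"
    using e1 e3 u2 unfolding eigenspace_mat_def by (intro eq_vecI) auto
  with u u2 Bx show thesis
    using that by blast
qed

section \<open>Geometric eigenvalue sequences give the q-Serre relations\<close>

lemma q_geometric_iff: "q_geometric q d th \<longleftrightarrow> (\<forall>i<d. th (Suc i) = q * th i)"
  unfolding q_geometric_def
proof safe
  fix i assume "\<forall>i. 1 \<le> i \<and> i \<le> d \<longrightarrow> th i = th (i - 1) * q" "i < d"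
  then show "th (Suc i) = q * th i"
    using spec[of _ "Suc i"] by (simp add: mult.commute)
next
  fix i assume "\<forall>i<d. th (Suc i) = q * th i" "1 \<le> i" "i \<le> d"
  then show "th i = th (i - 1) * q"
    by (cases i) (simp_all add: mult.commute)
qed

lemma serre_mat_eq_zero_if_q_geometric:
  fixes A B :: "'a::field mat"
  assumes A: "A \<in> carrier_mat n n" and B: "B \<in> carrier_mat n n" and "diagonalizable_mat A"
    and es: "eigenvalue_seq n A B d th" and geo: "q_geometric q d th" and q: "q \<noteq> 0"
  shows "serre_mat q A B = 0\<^sub>m n n"
proof (rule zero_mat_if_mult_mat_vec_zero)
  let ?K = "{v \<in> carrier_vec n. serre_mat q A B *\<^sub>v v \<in> {0\<^sub>v n}}"
  have "eigenspace_mat n A (th j) \<subseteq> ?K" if "j < Suc d" for j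
  proof
    fix x assume x: "x \<in> eigenspace_mat n A (th j)"
    obtain u1 u2 u3 where u1: "u1 \<in> espace_at n A d th (int j - 1)"
      and u3: "u3 \<in> espace_at n A d th (int j + 1)"
      and Sx: "serre_mat q A B *\<^sub>v x = serre_poly q (th (nat (int j - 1))) (th j) \<cdot>\<^sub>v u1
         + serre_poly q (th (Suc j)) (th j) \<cdot>\<^sub>v u3"
      using serre_mat_mult_eigenspace[OF A B es _ x] \<open>j < Suc d\<close> by (metis less_Suc_eq_le)
    have "serre_poly q (th (nat (int j - 1))) (th j) = 0 \<or> u1 = 0\<^sub>v n"
    proof (cases "j = 0")
      case False
      then have "th j = q * th (j - 1)" "nat (int j - 1) = j - 1"
        using geo \<open>j < Suc d\<close> unfolding q_geometric_iff by (cases j; simp)+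
      then show ?thesis
        using serre_poly_eq_0_iff[OF q] by simp
    qed (use u1 in \<open>simp add: espace_at_def\<close>)
    moreover have "serre_poly q (th (Suc j)) (th j) = 0 \<or> u3 = 0\<^sub>v n"
    proof (cases "j < d")
      case True
      then have "th (Suc j) = q * th j"
        using geo unfolding q_geometric_iff by simp
      then show ?thesis
        using serre_poly_eq_0_iff[OF q] by simp
    qed (use u3 in \<open>simp add: espace_at_def\<close>)
    ultimately have "serre_mat q A B *\<^sub>v x = 0\<^sub>v n"
      using Sx espace_at_eigen(1)[OF A u1] espace_at_eigen(1)[OF A u3] by (intro eq_vecI) auto
    then show "x \<in> ?K"
      using x unfolding eigenspace_mat_def by simp
  qed
  then have "eigensum n A th (Suc d) \<subseteq> ?K"
    using eigensum_subset[OF A] subspace_vec_preimage[OF subspace_vec_zero serre_mat_carrier[OF A B]]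
    by blast
  then show "serre_mat q A B *\<^sub>v v = 0\<^sub>v n" if "v \<in> carrier_vec n" for v
    using that diagonalizable_eigensum_eq_carrier[OF A \<open>diagonalizable_mat A\<close>] es
    unfolding eigenvalue_seq_def by blast
qed (rule serre_mat_carrier[OF A B])

section \<open>The q-Serre relations force geometric eigenvalue sequences\<close>

lemma espace_at_upper_eq_zero:
  assumes A: "A \<in> carrier_mat n n" and inj: "inj_on th {..d}" and i: "i < d"
    and u1: "u1 \<in> espace_at n A d th (int i - 1)" and u3: "u3 \<in> espace_at n A d th (int i + 1)"
    and comb: "a \<cdot>\<^sub>v u1 + b \<cdot>\<^sub>v u3 = 0\<^sub>v n" and "b \<noteq> 0"
  shows "u3 = 0\<^sub>v n"
proof (rule eigenspace_lincomb_eq_zero[OF A _ _ _ comb \<open>b \<noteq> 0\<close>])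
  show "u1 \<in> eigenspace_mat n A (th (nat (int i - 1)))" "u3 \<in> eigenspace_mat n A (th (Suc i))"
    using espace_at_eigen[OF A u1] espace_at_eigen[OF A u3] unfolding eigenspace_mat_def
    by (simp_all add: nat_add_distrib)
  show "th (nat (int i - 1)) \<noteq> th (Suc i)"
    using i by (intro inj_on_contraD[OF inj]) auto
qed

lemma eigensum_invariant_if_serre:
  fixes A B :: "'a::field mat"
  assumes A: "A \<in> carrier_mat n n" and B: "B \<in> carrier_mat n n"
    and es: "eigenvalue_seq n A B d th" and serre: "serre_mat q A B = 0\<^sub>m n n"
    and i: "i < d" and nonzero: "serre_poly q (th (Suc i)) (th i) \<noteq> 0"
  shows "\<forall>v\<in>eigensum n A th (Suc i). B *\<^sub>v v \<in> eigensum n A th (Suc i)"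
proof -
  let ?W = "eigensum n A th (Suc i)"
  have inj: "inj_on th {..d}"
    using es unfolding eigenvalue_seq_def eigen_ordering_def by simp
  have W: "subspace_vec n ?W"
    by (rule subspace_vec_eigensum[OF A])
  have "eigenspace_mat n A (th j) \<subseteq> {v \<in> carrier_vec n. B *\<^sub>v v \<in> ?W}" if j: "j < Suc i" for j
  proof
    fix x assume x: "x \<in> eigenspace_mat n A (th j)"
    have jd: "j \<le> d"
      using i j by simp
    obtain u1 u2 u3 where u: "u1 \<in> espace_at n A d th (int j - 1)" "u2 \<in> eigenspace_mat n A (th j)"
      "u3 \<in> espace_at n A d th (int j + 1)" and Bx: "B *\<^sub>v x = u1 + (u2 + u3)"
      and Sx: "serre_mat q A B *\<^sub>v x
         = serre_poly q (th (nat (int j - 1))) (th j) \<cdot>\<^sub>v u1 + serre_poly q (th (Suc j)) (th j) \<cdot>\<^sub>v u3"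
      by (rule serre_mat_mult_eigenspace[OF A B es jd x])
    have "espace_at n A d th (int j - 1) \<subseteq> ?W"
      using j by (intro espace_at_subset_eigensum[OF A]) simp
    moreover have "eigenspace_mat n A (th j) \<subseteq> ?W"
      using j by (rule eigenspace_subset_eigensum[OF A])
    ultimately have "u1 \<in> ?W" "u2 \<in> ?W"
      using u(1,2) by blast+
    moreover have "u3 \<in> ?W"
    proof (cases "j < i")
      case True
      then have "espace_at n A d th (int j + 1) \<subseteq> ?W"
        by (intro espace_at_subset_eigensum[OF A]) simp
      then show ?thesis
        using u(3) by blast
    next
      case False
      then have ji: "j = i"
        using j by simp
      have "serre_mat q A B *\<^sub>v x = 0\<^sub>v n"
        using x unfolding serre eigenspace_mat_def by (intro eq_vecI) auto
      then have "u3 = 0\<^sub>v n"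
        using Sx unfolding ji
        by (intro espace_at_upper_eq_zero[OF A inj i u(1)[unfolded ji] u(3)[unfolded ji] _ nonzero]) simp
      then show ?thesis
        using W unfolding subspace_vec_def by blast
    qed
    ultimately have "B *\<^sub>v x \<in> ?W"
      using W unfolding Bx subspace_vec_def by blast
    then show "x \<in> {v \<in> carrier_vec n. B *\<^sub>v v \<in> ?W}"
      using x unfolding eigenspace_mat_def by blast
  qed
  then have "?W \<subseteq> {v \<in> carrier_vec n. B *\<^sub>v v \<in> ?W}"
    by (intro eigensum_subset[OF A subspace_vec_preimage[OF W B]])
  then show ?thesis
    by blast
qed

lemma serre_poly_adjacent_eq_zero:
  fixes A B :: "'a::field mat"
  assumes A: "A \<in> carrier_mat n n" and B: "B \<in> carrier_mat n n"
    and irreducible: "irreducible_pair n A B"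
    and es: "eigenvalue_seq n A B d th" and serre: "serre_mat q A B = 0\<^sub>m n n" and i: "i < d"
  shows "serre_poly q (th (Suc i)) (th i) = 0"
proof (rule ccontr)
  let ?W = "eigensum n A th (Suc i)"
  assume "serre_poly q (th (Suc i)) (th i) \<noteq> 0"
  then have "\<forall>v\<in>?W. B *\<^sub>v v \<in> ?W"
    by (rule eigensum_invariant_if_serre[OF A B es serre i])
  then have W: "?W = {0\<^sub>v n} \<or> ?W = carrier_vec n"
    using irreducible subspace_vec_eigensum[OF A] eigensum_invariant[OF A]
    unfolding irreducible_pair_def by blast
  have eo: "eigen_ordering A d th"
    using es unfolding eigenvalue_seq_def by simp
  obtain w0 where w0: "w0 \<in> eigenspace_mat n A (th 0)" "w0 \<noteq> 0\<^sub>v n"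
    using eigen_ordering_eigenspace_nonzero[OF A eo] by blast
  obtain w1 where w1: "w1 \<in> eigenspace_mat n A (th (Suc i))" "w1 \<noteq> 0\<^sub>v n"
    using eigen_ordering_eigenspace_nonzero[OF A eo, of "Suc i"] i by auto
  have "w0 \<in> ?W"
    using w0 eigenspace_subset_eigensum[OF A, of 0 "Suc i" th] by auto
  with W w0 have "w1 \<in> ?W"
    using w1 unfolding eigenspace_mat_def by auto
  moreover have "th (Suc i) \<notin> th ` {..<Suc i}"
    using eo i unfolding eigen_ordering_def inj_on_def by fastforce
  ultimately show False
    using eigenspace_inter_eigensum[OF A w1(1)] w1(2) by blast
qed

lemma q_geometric_or_reverse:
  fixes th :: "nat \<Rightarrow> 'a::field"
  assumes inj: "inj_on th {..d}" and q: "q \<noteq> 0"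
    and step: "\<And>i. i < d \<Longrightarrow> th (Suc i) = q * th i \<or> q * th (Suc i) = th i"
  shows "q_geometric q d th \<or> q_geometric q d (\<lambda>i. th (d - i))"
proof -
  have no_return: "th (Suc (Suc i)) \<noteq> th i" if "Suc i < d" for i
    using that by (intro inj_on_contraD[OF inj]) auto
  have up: "th (Suc (Suc i)) = q * th (Suc i)" if "Suc i < d" "th (Suc i) = q * th i" for i
    using step[OF that(1)] no_return[OF that(1)] that(2) q by auto
  have down: "q * th (Suc (Suc i)) = th (Suc i)" if "Suc i < d" "q * th (Suc i) = th i" for i
    using step[OF that(1)] no_return[OF that(1)] that(2) by auto
  consider "d = 0" | "0 < d" "th 1 = q * th 0" | "0 < d" "q * th 1 = th 0"
    using step[of 0] by fastforce
  then show ?thesis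
  proof cases
    case 1
    then show ?thesis
      by (simp add: q_geometric_iff)
  next
    case 2
    have "th (Suc i) = q * th i" if "i < d" for i
      using that by (induction i) (use 2 up in auto)
    then show ?thesis
      by (simp add: q_geometric_iff)
  next
    case 3
    have "q * th (Suc i) = th i" if "i < d" for i
      using that by (induction i) (use 3 down in auto)
    moreover have "d - i = Suc (d - Suc i)" if "i < d" for i
      using that by simp
    ultimately show ?thesis
      by (simp add: q_geometric_iff)
  qed
qed

lemma q_geometric_eigenvalue_seq_if_serre:
  fixes A B :: "'a::field mat"
  assumes A: "A \<in> carrier_mat n n" and B: "B \<in> carrier_mat n n"
    and irreducible: "irreducible_pair n A B"
    and es: "eigenvalue_seq n A B d th" and serre: "serre_mat q A B = 0\<^sub>m n n" and q: "q \<noteq> 0"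
  shows "\<exists>th'. eigenvalue_seq n A B d th' \<and> q_geometric q d th'"
proof -
  have inj: "inj_on th {..d}"
    using es unfolding eigenvalue_seq_def eigen_ordering_def by simp
  have "th (Suc i) = q * th i \<or> q * th (Suc i) = th i" if i: "i < d" for i
  proof -
    have "serre_poly q (th (Suc i)) (th i) = 0"
      by (rule serre_poly_adjacent_eq_zero[OF A B irreducible es serre i])
    moreover have "th (Suc i) \<noteq> th i"
      using i by (intro inj_on_contraD[OF inj]) auto
    ultimately show ?thesis
      unfolding serre_poly_eq_0_iff[OF q] by blast
  qed
  then have "q_geometric q d th \<or> q_geometric q d (\<lambda>i. th (d - i))"
    by (rule q_geometric_or_reverse[OF inj q])
  then show ?thesis
    using es eigenvalue_seq_reverse[OF A es] by blast
qed

theorem lemma4p8: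
  fixes A B :: "'a::field mat" and q :: 'a and n :: nat
  assumes "TD_pair n A B"
    and "q \<noteq> 0" and "q \<noteq> 1" and "q \<noteq> -1"
  shows "(q_serre n q A B \<and> q_serre n q B A) \<longleftrightarrow>
         ((\<exists>d th. eigenvalue_seq n A B d th \<and> q_geometric q d th) \<and>
          (\<exists>\<delta> th. eigenvalue_seq n B A \<delta> th \<and> q_geometric q \<delta> th))"
proof -
  have A: "A \<in> carrier_mat n n" and B: "B \<in> carrier_mat n n"
    and diag: "diagonalizable_mat A" "diagonalizable_mat B"
    and "\<exists>d th. eigenvalue_seq n A B d th" "\<exists>\<delta> th. eigenvalue_seq n B A \<delta> th"
    and irr: "irreducible_pair n A B"
    using assms(1) unfolding TD_pair_def irreducible_pair_def by auto
  then obtain d th \<delta> th' where es: "eigenvalue_seq n A B d th" "eigenvalue_seq n B A \<delta> th'"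
    by blast
  have geo_A: "\<exists>th. eigenvalue_seq n A B d th \<and> q_geometric q d th" if "q_serre n q A B"
    using that unfolding q_serre_iff_serre_mat
    by (rule q_geometric_eigenvalue_seq_if_serre[OF A B irr es(1) _ \<open>q \<noteq> 0\<close>])
  have geo_B: "\<exists>th. eigenvalue_seq n B A \<delta> th \<and> q_geometric q \<delta> th" if "q_serre n q B A"
    using irr that unfolding q_serre_iff_serre_mat irreducible_pair_commute[of n A B]
    by (rule q_geometric_eigenvalue_seq_if_serre[OF B A _ es(2) _ \<open>q \<noteq> 0\<close>])
  have serre_A: "q_serre n q A B" if "eigenvalue_seq n A B d' \<theta>" "q_geometric q d' \<theta>" for d' \<theta>
    using serre_mat_eq_zero_if_q_geometric[OF A B diag(1) that \<open>q \<noteq> 0\<close>]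
    unfolding q_serre_iff_serre_mat .
  have serre_B: "q_serre n q B A" if "eigenvalue_seq n B A d' \<theta>" "q_geometric q d' \<theta>" for d' \<theta>
    using serre_mat_eq_zero_if_q_geometric[OF B A diag(2) that \<open>q \<noteq> 0\<close>]
    unfolding q_serre_iff_serre_mat .
  show ?thesis
    using geo_A geo_B serre_A serre_B by blast
qed

end
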